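(* Let $X,Z\in\mathbb{R}^{n\times r}$, let $\mathbf{e}=\mathrm{vec}(XX^{T}-ZZ^{T})\in\mathbb{R}^{n^{2}}$ and let $\mathbf{J}\in\mathbb{R}^{n^{2}\times nr}$ be the matrix satisfying $\mathbf{J}\,\mathrm{vec}(Y)=\mathrm{vec}(XY^{T}+YX^{T})$ for all $Y\in\mathbb{R}^{n\times r}$. If $\mathbf{J}^{\dagger}\mathbf{e}=0$, then either $XX^{T}=ZZ^{T}$ or $\sigma_{r}(X)=0$.
   Context: $\mathrm{vec}$ is the column-stacking vectorization, $\mathbf{J}^{\dagger}$ the Moore–Penrose pseudoinverse, and $\sigma_{r}(X)$ the $r$-th largest singular value of $X$. *)

theory Defs
  imports "Jordan_Normal_Form.Matrix" "Jordan_Normal_Form.Char_Poly"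
    "HOL-Computational_Algebra.Polynomial"
begin

definition vecm :: "real mat \<Rightarrow> real vec" where
  "vecm Y = vec (dim_row Y * dim_col Y) (\<lambda>t. Y $$ (t mod dim_row Y, t div dim_row Y))"

definition is_mp_pinv :: "real mat \<Rightarrow> real mat \<Rightarrow> bool" where
  "is_mp_pinv A B \<longleftrightarrow> B \<in> carrier_mat (dim_col A) (dim_row A) \<and>
     A * B * A = A \<and> B * A * B = B \<and>
     transpose_mat (A * B) = A * B \<and> transpose_mat (B * A) = B * A"

definition mp_pinv :: "real mat \<Rightarrow> real mat" where
  "mp_pinv A = (THE B. is_mp_pinv A B)"

text \<open>Singular values of an m x k matrix X, in non-increasing order: the square roots of
  the eigenvalues (with multiplicity) of X^T X, i.e. of the roots of its characteristic
  polynomial. (This list has length k; entries beyond min(m,k) are 0.)\<close>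
definition singular_values :: "real mat \<Rightarrow> real list" where
  "singular_values X = map sqrt (rev (sorted_list_of_multiset
      (proots (char_poly (transpose_mat X * X)))))"

definition sigma :: "nat \<Rightarrow> real mat \<Rightarrow> real" where
  "sigma k X = singular_values X ! (k - 1)"

end

theory Submission
  imports Defs
begin

text \<open>Since \<open>J\<^sup>T = J\<^sup>T J J\<^sup>\<dagger>\<close>, the hypothesis \<open>J\<^sup>\<dagger> e = 0\<close> gives \<open>J\<^sup>T e = 0\<close>. Pairing
  with \<open>vec Y\<close> yields \<open>0 = \<langle>E, X Y\<^sup>T + Y X\<^sup>T\<rangle> = 2 \<langle>E X, Y\<rangle>\<close> for the symmetric residual
  \<open>E = X X\<^sup>T - Z Z\<^sup>T\<close>, and \<open>Y = E X\<close> shows \<open>E X = 0\<close>. If \<open>G = X\<^sup>T X\<close> is singular, \<open>0\<close> is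
  its smallest eigenvalue (all are real and nonnegative), so \<open>\<sigma>\<^sub>r(X) = 0\<close>. Otherwise
  \<open>K = Z\<^sup>T X\<close> satisfies \<open>Z K = X G\<close> and \<open>K\<^sup>T K = G\<^sup>2\<close>, so \<open>K\<close> is invertible and \<open>Z = X U\<close> with
  \<open>U = G K\<^sup>-\<^sup>1\<close> orthogonal, whence \<open>Z Z\<^sup>T = X X\<^sup>T\<close>.

  Since \<open>mp_pinv\<close> is a definite description, the pseudoinverse must be shown to exist and be
  unique; it is assembled from the orthogonal projections onto the column spaces of \<open>A\<close> and
  \<open>A\<^sup>T\<close>, which are built one column at a time as in Gram--Schmidt.\<close>

definition outer_prod :: "real vec \<Rightarrow> real vec \<Rightarrow> real mat" where
  "outer_prod u v = mat (dim_vec u) (dim_vec v) (\<lambda>(i, j). u $ i * v $ j)"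

lemma outer_prod_carrier[simp]:
  "u \<in> carrier_vec m \<Longrightarrow> v \<in> carrier_vec k \<Longrightarrow> outer_prod u v \<in> carrier_mat m k"
  unfolding outer_prod_def by auto

lemma dim_outer_prod[simp]:
  "dim_row (outer_prod u v) = dim_vec u" "dim_col (outer_prod u v) = dim_vec v"
  unfolding outer_prod_def by auto

lemma mult_outer_prod:
  assumes A: "A \<in> carrier_mat m k" and x: "x \<in> carrier_vec k"
  shows "A * outer_prod x w = outer_prod (A *\<^sub>v x) w"
proof (rule eq_matI)
  fix i j assume i: "i < dim_row (outer_prod (A *\<^sub>v x) w)"
    and j: "j < dim_col (outer_prod (A *\<^sub>v x) w)"
  have "(A * outer_prod x w) $$ (i, j) = (\<Sum>l<k. A $$ (i, l) * x $ l) * w $ j"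
    using A x i j
    by (simp add: outer_prod_def scalar_prod_def atLeast0LessThan sum_distrib_right mult.assoc)
  also have "\<dots> = outer_prod (A *\<^sub>v x) w $$ (i, j)"
    using A x i j by (simp add: outer_prod_def scalar_prod_def atLeast0LessThan)
  finally show "(A * outer_prod x w) $$ (i, j) = outer_prod (A *\<^sub>v x) w $$ (i, j)" .
qed (use A in \<open>auto simp: outer_prod_def\<close>)

lemma outer_prod_mult_vec:
  assumes "dim_vec v = dim_vec w"
  shows "outer_prod u v *\<^sub>v w = (v \<bullet> w) \<cdot>\<^sub>v u"
  using assms
  by (intro eq_vecI) (auto simp: outer_prod_def scalar_prod_def sum_distrib_left mult_ac)

lemma outer_prod_mult_outer_prod:
  assumes "dim_vec v = dim_vec w"
  shows "outer_prod u v * outer_prod w z = (v \<bullet> w) \<cdot>\<^sub>m outer_prod u z"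
proof -
  have "outer_prod u v * outer_prod w z = outer_prod (outer_prod u v *\<^sub>v w) z"
    by (rule mult_outer_prod) (use assms in \<open>auto intro: carrier_matI carrier_vecI\<close>)
  also have "\<dots> = (v \<bullet> w) \<cdot>\<^sub>m outer_prod u z"
    unfolding outer_prod_mult_vec[OF assms] by (rule eq_matI) (simp_all add: outer_prod_def)
  finally show ?thesis .
qed

lemma smult_mat_mult_vec:
  "dim_vec v = dim_col A \<Longrightarrow> (k \<cdot>\<^sub>m A) *\<^sub>v v = k \<cdot>\<^sub>v (A *\<^sub>v (v :: 'a :: comm_semiring_0 vec))"
  by (rule eq_vecI) (auto simp: scalar_prod_def sum_distrib_left mult_ac)

lemma smult_smult_mat: "a \<cdot>\<^sub>m (b \<cdot>\<^sub>m A) = (a * b) \<cdot>\<^sub>m (A :: 'a :: semigroup_mult mat)"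
  by (rule eq_matI) (auto simp: mult.assoc)

lemma real_scalar_prod_self_eq_0_iff:
  "(v :: real vec) \<in> carrier_vec n \<Longrightarrow> v \<bullet> v = 0 \<longleftrightarrow> v = 0\<^sub>v n"
  using conjugate_square_eq_0_vec[of v n] by simp

lemma real_scalar_prod_self_nonneg: "(v :: real vec) \<bullet> v \<ge> 0"
  using conjugate_square_ge_0_vec[of v] by simp

lemma mult_unit_vec:
  fixes A :: "'a :: semiring_1 mat"
  assumes "A \<in> carrier_mat m k" and "j < k"
  shows "A *\<^sub>v unit_vec k j = col A j"
  using col_mult2[of A m k "1\<^sub>m k" k j] right_mult_one_mat[OF assms(1)] assms by simp

definition orth_proj :: "nat \<Rightarrow> real mat \<Rightarrow> bool" where
  "orth_proj m Q \<longleftrightarrow> Q \<in> carrier_mat m m \<and> transpose_mat Q = Q \<and> Q * Q = Q"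

lemma orth_proj_scalar_prod:
  assumes "orth_proj m Q" and "v \<in> carrier_vec m" and "w \<in> carrier_vec m"
  shows "(Q *\<^sub>v v) \<bullet> w = v \<bullet> (Q *\<^sub>v w)"
  using transpose_vec_mult_scalar[of Q m m w v] assms unfolding orth_proj_def by simp

lemma orth_proj_outer_prod:
  assumes r: "r \<in> carrier_vec m" and r0: "r \<noteq> 0\<^sub>v m"
  shows "orth_proj m ((1 / (r \<bullet> r)) \<cdot>\<^sub>m outer_prod r r)"
proof -
  let ?d = "1 / (r \<bullet> r)"
  have rr: "r \<bullet> r \<noteq> 0" using real_scalar_prod_self_eq_0_iff[OF r] r0 by simp
  have P: "outer_prod r r \<in> carrier_mat m m" using r by simp
  have "?d \<cdot>\<^sub>m outer_prod r r * (?d \<cdot>\<^sub>m outer_prod r r)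
      = ?d \<cdot>\<^sub>m (outer_prod r r * (?d \<cdot>\<^sub>m outer_prod r r))"
    by (rule mult_smult_assoc_mat[OF P, of _ m]) (use P in simp)
  also have "outer_prod r r * (?d \<cdot>\<^sub>m outer_prod r r) = ?d \<cdot>\<^sub>m (outer_prod r r * outer_prod r r)"
    by (rule mult_smult_distrib[OF P P])
  also have "outer_prod r r * outer_prod r r = (r \<bullet> r) \<cdot>\<^sub>m outer_prod r r"
    by (rule outer_prod_mult_outer_prod) simp
  finally have "?d \<cdot>\<^sub>m outer_prod r r * (?d \<cdot>\<^sub>m outer_prod r r) = ?d \<cdot>\<^sub>m outer_prod r r"
    unfolding smult_smult_mat using rr by simp
  moreover have "transpose_mat (?d \<cdot>\<^sub>m outer_prod r r) = ?d \<cdot>\<^sub>m outer_prod r r"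
    by (rule eq_matI) (auto simp: outer_prod_def mult.commute)
  ultimately show ?thesis unfolding orth_proj_def using P by simp
qed

lemma orth_proj_add:
  assumes Q: "orth_proj m Q" and S: "orth_proj m S" and QS: "Q * S = 0\<^sub>m m m"
  shows "orth_proj m (Q + S)"
proof -
  have Qc: "Q \<in> carrier_mat m m" and QT: "transpose_mat Q = Q" and QQ: "Q * Q = Q"
    and Sc: "S \<in> carrier_mat m m" and ST: "transpose_mat S = S" and SS: "S * S = S"
    using Q S unfolding orth_proj_def by auto
  have "S * Q = transpose_mat (Q * S)"
    using transpose_mult[OF Qc Sc] QT ST by simp
  then have SQ: "S * Q = 0\<^sub>m m m"
    using QS by simp
  have "(Q + S) * (Q + S) = (Q * Q + Q * S) + (S * Q + S * S)"
    using add_mult_distrib_mat[OF Qc Sc, of "Q + S" m] Qc Sc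
      mult_add_distrib_mat[OF Qc Qc Sc] mult_add_distrib_mat[OF Sc Qc Sc] by simp
  also have "\<dots> = Q + S"
    unfolding QQ QS SQ SS using Qc Sc by simp
  finally show ?thesis
    using Qc Sc QT ST unfolding orth_proj_def by (simp add: transpose_add)
qed

lemma orth_proj_add_outer_prod:
  assumes Q: "orth_proj m Q" and r: "r \<in> carrier_vec m"
    and Qr: "Q *\<^sub>v r = 0\<^sub>v m" and r0: "r \<noteq> 0\<^sub>v m"
  defines "S \<equiv> (1 / (r \<bullet> r)) \<cdot>\<^sub>m outer_prod r r"
  shows "orth_proj m (Q + S)"
    and "\<And>v. v \<in> carrier_vec m \<Longrightarrow> (Q + S) *\<^sub>v v = Q *\<^sub>v v + ((r \<bullet> v) / (r \<bullet> r)) \<cdot>\<^sub>v r"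
proof -
  have Qc: "Q \<in> carrier_mat m m" using Q unfolding orth_proj_def by auto
  have Sc: "S \<in> carrier_mat m m" using r unfolding S_def by simp
  have "Q * outer_prod r r = 0\<^sub>m m m"
    unfolding mult_outer_prod[OF Qc r] Qr using r by (auto intro!: eq_matI simp: outer_prod_def)
  then have "Q * S = 0\<^sub>m m m"
    unfolding S_def using mult_smult_distrib[OF Qc, of "outer_prod r r" m] r by simp
  then show "orth_proj m (Q + S)"
    using orth_proj_add[OF Q orth_proj_outer_prod[OF r r0]] unfolding S_def by simp
  show "(Q + S) *\<^sub>v v = Q *\<^sub>v v + ((r \<bullet> v) / (r \<bullet> r)) \<cdot>\<^sub>v r" if v: "v \<in> carrier_vec m" for v
  proof -
    have "S *\<^sub>v v = ((r \<bullet> v) / (r \<bullet> r)) \<cdot>\<^sub>v r"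
      unfolding S_def using r v
      by (simp add: smult_mat_mult_vec outer_prod_mult_vec smult_smult_assoc)
    then show ?thesis using add_mult_distrib_mat_vec[OF Qc Sc v] by simp
  qed
qed

lemma orth_proj_residual:
  assumes Q: "orth_proj m Q" and a: "a \<in> carrier_vec m"
  shows "Q *\<^sub>v (a - Q *\<^sub>v a) = 0\<^sub>v m"
    and "\<And>v. v \<in> carrier_vec m \<Longrightarrow> Q *\<^sub>v v = v \<Longrightarrow> (a - Q *\<^sub>v a) \<bullet> v = 0"
    and "(a - Q *\<^sub>v a) \<bullet> a = (a - Q *\<^sub>v a) \<bullet> (a - Q *\<^sub>v a)"
proof -
  have Qc: "Q \<in> carrier_mat m m" and QQ: "Q * Q = Q" using Q unfolding orth_proj_def by auto
  have Qa: "Q *\<^sub>v a \<in> carrier_vec m" using Qc a by auto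
  have r: "a - Q *\<^sub>v a \<in> carrier_vec m" using a Qa by auto
  show Qr: "Q *\<^sub>v (a - Q *\<^sub>v a) = 0\<^sub>v m"
    using mult_minus_distrib_mat_vec[OF Qc a Qa] QQ Qa by (simp flip: assoc_mult_mat_vec[OF Qc Qc a])
  show orth: "(a - Q *\<^sub>v a) \<bullet> v = 0" if "v \<in> carrier_vec m" "Q *\<^sub>v v = v" for v
    using orth_proj_scalar_prod[OF Q r that(1)] Qr that by simp
  have "a = (a - Q *\<^sub>v a) + Q *\<^sub>v a"
    using a Qa Qc by (intro eq_vecI) auto
  then show "(a - Q *\<^sub>v a) \<bullet> a = (a - Q *\<^sub>v a) \<bullet> (a - Q *\<^sub>v a)"
    using orth[OF Qa] QQ Qc a r Qa
    by (metis add.right_neutral assoc_mult_mat_vec scalar_prod_add_distrib)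
qed

lemma mult_add_smult_outer_prod:
  assumes A: "A \<in> carrier_mat m k" and W: "W \<in> carrier_mat k m"
    and x: "x \<in> carrier_vec k" and r: "r \<in> carrier_vec m"
  shows "A * (W + c \<cdot>\<^sub>m outer_prod x r) = A * W + c \<cdot>\<^sub>m outer_prod (A *\<^sub>v x) r"
  using mult_add_distrib_mat[OF A W, of "c \<cdot>\<^sub>m outer_prod x r"] x r
    mult_smult_distrib[OF A outer_prod_carrier[OF x r]] mult_outer_prod[OF A x]
  by simp

lemma orth_proj_extend:
  fixes A :: "real mat"
  assumes A: "A \<in> carrier_mat m k" and Q: "orth_proj m Q" and W: "W \<in> carrier_mat k m"
    and QAW: "Q = A * W" and y: "y \<in> carrier_vec k"
  obtains Q' W' where "orth_proj m Q'" "W' \<in> carrier_mat k m" "Q' = A * W'"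
    "Q' *\<^sub>v (A *\<^sub>v y) = A *\<^sub>v y" "\<And>v. v \<in> carrier_vec m \<Longrightarrow> Q *\<^sub>v v = v \<Longrightarrow> Q' *\<^sub>v v = v"
proof -
  have Qc: "Q \<in> carrier_mat m m" using Q unfolding orth_proj_def by auto
  define a where "a = A *\<^sub>v y"
  define r where "r = a - Q *\<^sub>v a"
  define x where "x = y - W *\<^sub>v a"
  have a: "a \<in> carrier_vec m" and x: "x \<in> carrier_vec k" and r: "r \<in> carrier_vec m"
    and Qa: "Q *\<^sub>v a \<in> carrier_vec m"
    using A W y Qc unfolding a_def x_def r_def by auto
  have Ax: "A *\<^sub>v x = r"
    unfolding r_def x_def a_def QAW using A W y a_def a
    by (simp add: mult_minus_distrib_mat_vec[OF A y])
  note residual = orth_proj_residual[OF Q a, folded r_def]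
  show ?thesis
  proof (cases "r = 0\<^sub>v m")
    case True
    have "Q *\<^sub>v a = a"
    proof (rule eq_vecI)
      fix i assume "i < dim_vec a"
      then show "(Q *\<^sub>v a) $ i = a $ i"
        using arg_cong[OF True[unfolded r_def], of "\<lambda>v. v $ i"] a Qc by simp
    qed (use a Qc in simp)
    then show ?thesis using that[OF Q W QAW] unfolding a_def by blast
  next
    case False
    define S where "S = (1 / (r \<bullet> r)) \<cdot>\<^sub>m outer_prod r r"
    have Q': "orth_proj m (Q + S)"
      and Q'_mult: "\<And>v. v \<in> carrier_vec m \<Longrightarrow> (Q + S) *\<^sub>v v = Q *\<^sub>v v + ((r \<bullet> v) / (r \<bullet> r)) \<cdot>\<^sub>v r"
      using orth_proj_add_outer_prod[OF Q r residual(1) False] unfolding S_def by blast+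
    have W': "W + (1 / (r \<bullet> r)) \<cdot>\<^sub>m outer_prod x r \<in> carrier_mat k m" using W x r by auto
    have AW': "Q + S = A * (W + (1 / (r \<bullet> r)) \<cdot>\<^sub>m outer_prod x r)"
      unfolding mult_add_smult_outer_prod[OF A W x r] Ax S_def QAW ..
    have "(Q + S) *\<^sub>v a = Q *\<^sub>v a + r"
      using Q'_mult[OF a] residual(3) False r by (simp add: real_scalar_prod_self_eq_0_iff[OF r])
    also have "\<dots> = a" unfolding r_def using a Qc by (intro eq_vecI) auto
    finally have "(Q + S) *\<^sub>v a = a" .
    moreover have "(Q + S) *\<^sub>v v = v" if "v \<in> carrier_vec m" "Q *\<^sub>v v = v" for v
      using Q'_mult[OF that(1)] residual(2)[OF that] that r by (auto intro!: eq_vecI)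
    ultimately show ?thesis using that[OF Q' W' AW'] unfolding a_def by blast
  qed
qed

lemma column_space_proj_exists:
  fixes A :: "real mat"
  assumes A: "A \<in> carrier_mat m k"
  obtains Q W where "orth_proj m Q" "W \<in> carrier_mat k m" "Q = A * W" "Q * A = A"
proof -
  have "\<exists>Q W. orth_proj m Q \<and> W \<in> carrier_mat k m \<and> Q = A * W \<and>
          (\<forall>i<j. Q *\<^sub>v col A i = col A i)" if "j \<le> k" for j
    using that
  proof (induction j)
    case 0
    have "orth_proj m (0\<^sub>m m m)" unfolding orth_proj_def by auto
    then show ?case using A by (intro exI[of _ "0\<^sub>m m m"] exI[of _ "0\<^sub>m k m"]) auto
  next
    case (Suc j)
    then obtain Q W where Q: "orth_proj m Q" "W \<in> carrier_mat k m" "Q = A * W"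
      and fixed: "\<forall>i<j. Q *\<^sub>v col A i = col A i" by auto
    obtain Q' W' where Q': "orth_proj m Q'" "W' \<in> carrier_mat k m" "Q' = A * W'"
      and new: "Q' *\<^sub>v col A j = col A j"
      and old: "\<And>v. v \<in> carrier_vec m \<Longrightarrow> Q *\<^sub>v v = v \<Longrightarrow> Q' *\<^sub>v v = v"
      using orth_proj_extend[OF A Q unit_vec_carrier[of k j]] mult_unit_vec[OF A] Suc.prems
      by (metis Suc_le_lessD)
    have "\<forall>i<Suc j. Q' *\<^sub>v col A i = col A i"
      using new old fixed A Suc.prems by (auto simp: less_Suc_eq)
    with Q' show ?case by blast
  qed
  then obtain Q W where Q: "orth_proj m Q" and W: "W \<in> carrier_mat k m" and QAW: "Q = A * W"
    and fixed: "\<forall>i<k. Q *\<^sub>v col A i = col A i" by blast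
  have Qc: "Q \<in> carrier_mat m m" using Q unfolding orth_proj_def by auto
  have "Q * A = A"
  proof (rule mat_col_eqI)
    fix i assume "i < dim_col A"
    then show "col (Q * A) i = col A i" using col_mult2[OF Qc A] fixed A by simp
  qed (use A Qc in auto)
  with that Q W QAW show ?thesis by blast
qed

lemma mp_pinv_exists:
  fixes A :: "real mat"
  assumes A: "A \<in> carrier_mat m k"
  shows "\<exists>B. is_mp_pinv A B"
proof -
  have AT: "transpose_mat A \<in> carrier_mat k m" using A by auto
  obtain Q W where Q: "orth_proj m Q" and W: "W \<in> carrier_mat k m"
    and QAW: "Q = A * W" and QA: "Q * A = A"
    using column_space_proj_exists[OF A] .
  obtain R V where R: "orth_proj k R" and V: "V \<in> carrier_mat m k"
    and RAV: "R = transpose_mat A * V" and RA: "R * transpose_mat A = transpose_mat A"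
    using column_space_proj_exists[OF AT] .
  have Qc: "Q \<in> carrier_mat m m" and QT: "transpose_mat Q = Q" and QQ: "Q * Q = Q"
    using Q unfolding orth_proj_def by auto
  have Rc: "R \<in> carrier_mat k k" and RT: "transpose_mat R = R" and RR: "R * R = R"
    using R unfolding orth_proj_def by auto
  have AR: "A * R = A"
    using arg_cong[OF RA, of transpose_mat] transpose_mult[OF Rc AT] RT by simp
  have RVA: "R = transpose_mat V * A"
    using arg_cong[OF RAV, of transpose_mat] transpose_mult[OF AT V] RT by simp
  define B where "B = R * W * Q"
  have RW: "R * W \<in> carrier_mat k m" using Rc W by auto
  have B: "B \<in> carrier_mat k m" unfolding B_def using RW Qc by auto
  have "A * B = A * R * W * Q"
    unfolding B_def using assoc_mult_mat[OF A RW Qc] assoc_mult_mat[OF A Rc W] by simp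
  then have AB: "A * B = Q" using AR QAW QQ by simp
  have VT: "transpose_mat V \<in> carrier_mat k m" using V by auto
  have AW: "A * W \<in> carrier_mat m m" using A W by auto
  have "B * A = R * W * A"
    unfolding B_def using assoc_mult_mat[OF RW Qc A] QA by simp
  also have "\<dots> = transpose_mat V * (A * W * A)"
    unfolding RVA using assoc_mult_mat[OF VT A W] assoc_mult_mat[OF VT AW A] by simp
  also have "A * W * A = A" using QAW QA by simp
  finally have BA: "B * A = R" using RVA by simp
  have "B * A * B = R * R * W * Q"
    unfolding BA unfolding B_def using assoc_mult_mat[OF Rc RW Qc] assoc_mult_mat[OF Rc Rc W] by simp
  then have "B * A * B = B" unfolding B_def RR .
  moreover have "A * B * A = A" using AB QA by simp
  ultimately show ?thesis
    unfolding is_mp_pinv_def using B A AB BA QT RT by auto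
qed

lemma mp_pinv_transpose_absorb:
  fixes A B :: "real mat"
  assumes A: "A \<in> carrier_mat m k" and B: "is_mp_pinv A B"
  shows "transpose_mat A * (A * B) = transpose_mat A"
    and "B * A * transpose_mat A = transpose_mat A"
proof -
  have Bc: "B \<in> carrier_mat k m" and ABA: "A * B * A = A"
    and ABT: "transpose_mat (A * B) = A * B" and BAT: "transpose_mat (B * A) = B * A"
    using A B unfolding is_mp_pinv_def by auto
  have AB: "A * B \<in> carrier_mat m m" and BA: "B * A \<in> carrier_mat k k" using A Bc by auto
  have "transpose_mat A = transpose_mat (A * B * A)" using ABA by simp
  also have "\<dots> = transpose_mat A * transpose_mat (A * B)" by (rule transpose_mult[OF AB A])
  finally show "transpose_mat A * (A * B) = transpose_mat A" using ABT by simp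
  have "transpose_mat A = transpose_mat (A * (B * A))" using ABA assoc_mult_mat[OF A Bc A] by simp
  also have "\<dots> = transpose_mat (B * A) * transpose_mat A" by (rule transpose_mult[OF A BA])
  finally show "B * A * transpose_mat A = transpose_mat A" using BAT by simp
qed

lemma mp_pinv_unique:
  fixes A B1 B2 :: "real mat"
  assumes A: "A \<in> carrier_mat m k" and h1: "is_mp_pinv A B1" and h2: "is_mp_pinv A B2"
  shows "B1 = B2"
proof -
  have B1: "B1 \<in> carrier_mat k m" and BAB1: "B1 * A * B1 = B1"
    and T1: "transpose_mat (A * B1) = A * B1"
    using h1 A unfolding is_mp_pinv_def by auto
  have B2: "B2 \<in> carrier_mat k m" and BAB2: "B2 * A * B2 = B2"
    and T2: "transpose_mat (B2 * A) = B2 * A"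
    using h2 A unfolding is_mp_pinv_def by auto
  have AT: "transpose_mat A \<in> carrier_mat k m" using A by auto
  have B1T: "transpose_mat B1 \<in> carrier_mat m k" and B2T: "transpose_mat B2 \<in> carrier_mat m k"
    using B1 B2 by auto
  have AB1: "A * B1 \<in> carrier_mat m m" and AB2: "A * B2 \<in> carrier_mat m m"
    and B1A: "B1 * A \<in> carrier_mat k k"
    using A B1 B2 by auto
  have B1_absorb: "B1 * (A * B1) = B1" using BAB1 assoc_mult_mat[OF B1 A B1] by simp
  have "B1 = B1 * (transpose_mat B1 * transpose_mat A)"
    using B1_absorb T1 transpose_mult[OF A B1] by simp
  also have "\<dots> = B1 * (transpose_mat B1 * (transpose_mat A * (A * B2)))"
    using mp_pinv_transpose_absorb(1)[OF A h2] by simp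
  also have "\<dots> = B1 * (A * B1) * (A * B2)"
    using assoc_mult_mat[OF B1T AT AB2] transpose_mult[OF A B1] T1 assoc_mult_mat[OF B1 AB1 AB2]
    by simp
  also have "\<dots> = B1 * A * B2"
    using B1_absorb assoc_mult_mat[OF B1 A B2] by simp
  finally have B1_eq: "B1 = B1 * A * B2" .
  have "B2 = (transpose_mat A * transpose_mat B2) * B2"
    using BAB2 T2 transpose_mult[OF B2 A] by simp
  also have "\<dots> = (B1 * A * transpose_mat A * transpose_mat B2) * B2"
    using mp_pinv_transpose_absorb(2)[OF A h1] by simp
  also have "\<dots> = B1 * A * ((transpose_mat A * transpose_mat B2) * B2)"
    using assoc_mult_mat[OF B1A AT B2T] assoc_mult_mat[OF B1A mult_carrier_mat[OF AT B2T] B2]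
    by simp
  also have "(transpose_mat A * transpose_mat B2) * B2 = B2"
    using BAB2 T2 transpose_mult[OF B2 A] by simp
  finally show ?thesis using B1_eq by simp
qed

lemma is_mp_pinv_mp_pinv:
  fixes A :: "real mat"
  assumes A: "A \<in> carrier_mat m k"
  shows "is_mp_pinv A (mp_pinv A)"
proof -
  obtain B where B: "is_mp_pinv A B" using mp_pinv_exists[OF A] ..
  show ?thesis unfolding mp_pinv_def
    by (rule theI[of "is_mp_pinv A", OF B]) (rule mp_pinv_unique[OF A _ B])
qed

lemma mult_mat_vec_zero: "(A :: 'a :: semiring_0 mat) \<in> carrier_mat m k \<Longrightarrow> A *\<^sub>v 0\<^sub>v k = 0\<^sub>v m"
  by (rule eq_vecI) (auto simp: scalar_prod_def)

lemma mp_pinv_mult_vec_eq_0_imp_transpose: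
  fixes A :: "real mat"
  assumes A: "A \<in> carrier_mat m k" and v: "v \<in> carrier_vec m"
    and Bv: "mp_pinv A *\<^sub>v v = 0\<^sub>v k"
  shows "transpose_mat A *\<^sub>v v = 0\<^sub>v k"
proof -
  have B: "is_mp_pinv A (mp_pinv A)" by (rule is_mp_pinv_mp_pinv[OF A])
  then have Bc: "mp_pinv A \<in> carrier_mat k m" using A unfolding is_mp_pinv_def by auto
  have "transpose_mat A *\<^sub>v v = transpose_mat A * (A * mp_pinv A) *\<^sub>v v"
    using mp_pinv_transpose_absorb(1)[OF A B] by simp
  also have "\<dots> = transpose_mat A *\<^sub>v (A *\<^sub>v (mp_pinv A *\<^sub>v v))"
    using assoc_mult_mat_vec[OF _ mult_carrier_mat[OF A Bc] v, of "transpose_mat A" k]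
      assoc_mult_mat_vec[OF A Bc v] A by simp
  finally show ?thesis
    using Bv mult_mat_vec_zero[OF A] mult_mat_vec_zero[of "transpose_mat A" k m] A by simp
qed

lemma sum_mod_div_eq_double_sum:
  fixes f :: "nat \<Rightarrow> nat \<Rightarrow> 'a :: comm_monoid_add"
  shows "(\<Sum>t\<in>{0..<n * m}. f (t mod n) (t div n)) = (\<Sum>j\<in>{0..<m}. \<Sum>i\<in>{0..<n}. f i j)"
proof (induction m)
  case (Suc m)
  have "{n * m..<n * Suc m} = {0 + n * m..<n + n * m}" by (simp add: add.commute)
  then have "(\<Sum>t\<in>{n * m..<n * Suc m}. f (t mod n) (t div n))
      = (\<Sum>i\<in>{0..<n}. f ((i + n * m) mod n) ((i + n * m) div n))"
    using sum.shift_bounds_nat_ivl[of "\<lambda>t. f (t mod n) (t div n)" 0 "n * m" n] by simp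
  also have "\<dots> = (\<Sum>i\<in>{0..<n}. f i m)"
    by (rule sum.cong) auto
  finally show ?case
    using Suc sum.atLeastLessThan_concat[of 0 "n * m" "n * Suc m" "\<lambda>t. f (t mod n) (t div n)"]
    by simp
qed simp

lemma vecm_carrier: "Y \<in> carrier_mat n m \<Longrightarrow> vecm Y \<in> carrier_vec (n * m)"
  unfolding vecm_def by auto

lemma vecm_add: "A \<in> carrier_mat n m \<Longrightarrow> B \<in> carrier_mat n m \<Longrightarrow> vecm (A + B) = vecm A + vecm B"
proof -
  assume A: "A \<in> carrier_mat n m" and B: "B \<in> carrier_mat n m"
  have "t mod n < n \<and> t div n < m" if "t < n * m" for t
    using that by (cases n) (auto simp: div_less_iff_less_mult mult.commute)
  then show ?thesis unfolding vecm_def using A B by (intro eq_vecI) auto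
qed

lemma vecm_scalar_prod:
  assumes "A \<in> carrier_mat n m" and "B \<in> carrier_mat n m"
  shows "vecm A \<bullet> vecm B = (\<Sum>i\<in>{0..<n}. \<Sum>j\<in>{0..<m}. A $$ (i, j) * B $$ (i, j))"
proof -
  have "vecm A \<bullet> vecm B = (\<Sum>t\<in>{0..<n * m}. A $$ (t mod n, t div n) * B $$ (t mod n, t div n))"
    using assms unfolding vecm_def scalar_prod_def by auto
  also have "\<dots> = (\<Sum>j\<in>{0..<m}. \<Sum>i\<in>{0..<n}. A $$ (i, j) * B $$ (i, j))"
    by (rule sum_mod_div_eq_double_sum)
  finally show ?thesis by (subst sum.swap)
qed

lemma vecm_scalar_prod_transpose:
  assumes "A \<in> carrier_mat n m" and "B \<in> carrier_mat n m"
  shows "vecm (transpose_mat A) \<bullet> vecm (transpose_mat B) = vecm A \<bullet> vecm B"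
  unfolding vecm_scalar_prod[OF assms] using assms
  by (subst vecm_scalar_prod[of _ m n]) (auto intro: sum.swap)

lemma vecm_scalar_prod_mult_transpose:
  assumes E: "E \<in> carrier_mat n n" and X: "X \<in> carrier_mat n r" and Y: "Y \<in> carrier_mat n r"
  shows "vecm E \<bullet> vecm (Y * transpose_mat X) = vecm (E * X) \<bullet> vecm Y"
proof -
  have YX: "Y * transpose_mat X \<in> carrier_mat n n" using X Y by auto
  have "vecm E \<bullet> vecm (Y * transpose_mat X)
      = (\<Sum>i\<in>{0..<n}. \<Sum>j\<in>{0..<n}. E $$ (i, j) * (\<Sum>l\<in>{0..<r}. Y $$ (i, l) * X $$ (j, l)))"
    unfolding vecm_scalar_prod[OF E YX] using X Y by (auto intro!: sum.cong simp: scalar_prod_def)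
  also have "\<dots> = (\<Sum>i\<in>{0..<n}. \<Sum>j\<in>{0..<n}. \<Sum>l\<in>{0..<r}. Y $$ (i, l) * (E $$ (i, j) * X $$ (j, l)))"
    by (simp add: sum_distrib_left mult_ac)
  also have "\<dots> = (\<Sum>i\<in>{0..<n}. \<Sum>l\<in>{0..<r}. \<Sum>j\<in>{0..<n}. Y $$ (i, l) * (E $$ (i, j) * X $$ (j, l)))"
    by (rule sum.cong[OF refl], rule sum.swap)
  also have "\<dots> = vecm (E * X) \<bullet> vecm Y"
    unfolding vecm_scalar_prod[OF mult_carrier_mat[OF E X] Y] using E X
    by (auto intro!: sum.cong simp: scalar_prod_def sum_distrib_left mult_ac)
  finally show ?thesis .
qed

lemma vecm_scalar_prod_symmetrized:
  assumes E: "E \<in> carrier_mat n n" and E_sym: "transpose_mat E = E"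
    and X: "X \<in> carrier_mat n r" and Y: "Y \<in> carrier_mat n r"
  shows "vecm E \<bullet> vecm (X * transpose_mat Y + Y * transpose_mat X) = 2 * (vecm (E * X) \<bullet> vecm Y)"
proof -
  have XY: "X * transpose_mat Y \<in> carrier_mat n n" and YX: "Y * transpose_mat X \<in> carrier_mat n n"
    using X Y by auto
  have "vecm E \<bullet> vecm (X * transpose_mat Y) = vecm E \<bullet> vecm (Y * transpose_mat X)"
    using vecm_scalar_prod_transpose[OF E XY] E_sym transpose_mult[OF X, of "transpose_mat Y" n] Y
    by simp
  then show ?thesis
    using vecm_scalar_prod_mult_transpose[OF E X Y] vecm_carrier[OF E] vecm_carrier[OF XY]
      vecm_carrier[OF YX]
    by (simp add: vecm_add[OF XY YX] scalar_prod_add_distrib[of _ "n * n"])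
qed

lemma vecm_self_scalar_prod_eq_0:
  assumes Y: "Y \<in> carrier_mat n m" and Y0: "vecm Y \<bullet> vecm Y = 0"
  shows "Y = 0\<^sub>m n m"
proof (rule eq_matI)
  fix i j assume i: "i < dim_row (0\<^sub>m n m)" and j: "j < dim_col (0\<^sub>m n m)"
  have "(\<Sum>i\<in>{0..<n}. \<Sum>j\<in>{0..<m}. Y $$ (i, j) * Y $$ (i, j)) = 0"
    using Y0 vecm_scalar_prod[OF Y Y] by simp
  then have "\<forall>i\<in>{0..<n}. (\<Sum>j\<in>{0..<m}. Y $$ (i, j) * Y $$ (i, j)) = 0"
    by (subst (asm) sum_nonneg_eq_0_iff) (auto intro: sum_nonneg)
  then have "\<forall>j\<in>{0..<m}. Y $$ (i, j) * Y $$ (i, j) = 0"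
    using i by (subst (asm) sum_nonneg_eq_0_iff) auto
  then show "Y $$ (i, j) = 0\<^sub>m n m $$ (i, j)" using i j by auto
qed (use Y in auto)

lemma mult_transpose_mult_orthogonal:
  fixes X U :: "'a :: field mat"
  assumes X: "X \<in> carrier_mat n r" and U: "U \<in> carrier_mat r r"
    and UTU: "transpose_mat U * U = 1\<^sub>m r"
  shows "X * U * transpose_mat (X * U) = X * transpose_mat X"
proof -
  have UT: "transpose_mat U \<in> carrier_mat r r" and XT: "transpose_mat X \<in> carrier_mat r n"
    using U X by auto
  have UUT: "U * transpose_mat U = 1\<^sub>m r"
    by (rule mat_mult_left_right_inverse[OF UT U UTU])
  have "X * U * transpose_mat (X * U) = X * U * transpose_mat U * transpose_mat X"
    using transpose_mult[OF X U] assoc_mult_mat[OF mult_carrier_mat[OF X U] UT XT] by simp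
  also have "X * U * transpose_mat U = X"
    using assoc_mult_mat[OF X U UT] UUT X by simp
  finally show ?thesis .
qed

lemma mat_eq_of_diff_eq_0:
  fixes A B :: "'a :: group_add mat"
  assumes "A - B = 0\<^sub>m n m" and "A \<in> carrier_mat n m" and "B \<in> carrier_mat n m"
  shows "A = B"
proof (rule eq_matI)
  fix i j assume "i < dim_row B" and "j < dim_col B"
  then show "A $$ (i, j) = B $$ (i, j)"
    using arg_cong[OF assms(1), of "\<lambda>M. M $$ (i, j)"] assms(2,3) by simp
qed (use assms in auto)

lemma det_nonzero_imp_inverse:
  fixes A :: "'a :: field mat"
  assumes A: "A \<in> carrier_mat n n" and d: "det A \<noteq> 0"
  obtains B where "B \<in> carrier_mat n n" "A * B = 1\<^sub>m n"
proof -
  have "A \<in> Units (ring_mat TYPE('a) n undefined)" by (rule det_non_zero_imp_unit[OF A d])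
  then show ?thesis using that unfolding Units_def by (auto simp: ring_mat_simps)
qed

lemma orthogonal_of_transpose_mult_eq_square:
  fixes G K Ki :: "'a :: comm_ring_1 mat"
  assumes G: "G \<in> carrier_mat r r" and G_sym: "transpose_mat G = G"
    and K: "K \<in> carrier_mat r r" and Ki: "Ki \<in> carrier_mat r r" and KKi: "K * Ki = 1\<^sub>m r"
    and KTK: "transpose_mat K * K = G * G"
  shows "transpose_mat (G * Ki) * (G * Ki) = 1\<^sub>m r"
proof -
  have KT: "transpose_mat K \<in> carrier_mat r r" and KiT: "transpose_mat Ki \<in> carrier_mat r r"
    using K Ki by auto
  have "transpose_mat (G * Ki) * (G * Ki) = transpose_mat Ki * (transpose_mat K * K) * Ki"
    unfolding KTK transpose_mult[OF G Ki] G_sym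
    using assoc_mult_mat[OF KiT G mult_carrier_mat[OF G Ki]]
      assoc_mult_mat[OF KiT mult_carrier_mat[OF G G] Ki] assoc_mult_mat[OF G G Ki]
    by simp
  also have "\<dots> = transpose_mat (K * Ki) * (K * Ki)"
    unfolding transpose_mult[OF K Ki]
    using assoc_mult_mat[OF KiT mult_carrier_mat[OF KT K] Ki] assoc_mult_mat[OF KT K Ki]
      assoc_mult_mat[OF KiT KT mult_carrier_mat[OF K Ki]]
    by simp
  finally show ?thesis unfolding KKi by simp
qed

lemma mult_transpose_eq_of_full_column_rank:
  fixes X Z :: "real mat"
  assumes X: "X \<in> carrier_mat n r" and Z: "Z \<in> carrier_mat n r"
    and EX: "(X * transpose_mat X - Z * transpose_mat Z) * X = 0\<^sub>m n r"
    and full_rank: "det (transpose_mat X * X) \<noteq> 0"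
  shows "X * transpose_mat X = Z * transpose_mat Z"
proof -
  have XT: "transpose_mat X \<in> carrier_mat r n" and ZT: "transpose_mat Z \<in> carrier_mat r n"
    using X Z by auto
  define G where "G = transpose_mat X * X"
  define K where "K = transpose_mat Z * X"
  have G: "G \<in> carrier_mat r r" and K: "K \<in> carrier_mat r r"
    using X Z unfolding G_def K_def by auto
  have G_sym: "transpose_mat G = G" unfolding G_def using transpose_mult[OF XT X] by simp
  have "X * transpose_mat X * X - Z * transpose_mat Z * X = 0\<^sub>m n r"
    using EX minus_mult_distrib_mat[OF mult_carrier_mat[OF X XT] mult_carrier_mat[OF Z ZT] X] by simp
  then have "X * transpose_mat X * X = Z * transpose_mat Z * X"
    by (rule mat_eq_of_diff_eq_0) (use X Z in auto)
  then have ZK: "Z * K = X * G"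
    unfolding G_def K_def using X Z by simp
  have "transpose_mat K * K = transpose_mat X * (Z * K)"
    unfolding K_def using transpose_mult[OF ZT X] assoc_mult_mat[OF XT Z mult_carrier_mat[OF ZT X]]
    by simp
  also have "\<dots> = G * G" unfolding ZK G_def using assoc_mult_mat[OF XT X G[unfolded G_def]] by simp
  finally have KTK: "transpose_mat K * K = G * G" .
  have "det K * det K \<noteq> 0"
    using arg_cong[OF KTK, of det] det_mult[OF _ K, of "transpose_mat K"] det_transpose[OF K]
      det_mult[OF G G] full_rank K G unfolding G_def by auto
  then obtain Ki where Ki: "Ki \<in> carrier_mat r r" and KKi: "K * Ki = 1\<^sub>m r"
    using det_nonzero_imp_inverse[OF K] by auto
  have "Z = Z * K * Ki" using KKi Z K Ki by simp
  then have "Z = X * (G * Ki)" unfolding ZK using X G Ki by simp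
  then show ?thesis
    using mult_transpose_mult_orthogonal[OF X mult_carrier_mat[OF G Ki]]
      orthogonal_of_transpose_mult_eq_square[OF G G_sym K Ki KKi KTK]
    by simp
qed

lemma real_symmetric_eigenvalue_real:
  fixes G :: "real mat"
  assumes G: "G \<in> carrier_mat r r" and G_sym: "transpose_mat G = G"
    and ev: "eigenvalue (map_mat complex_of_real G) a"
  shows "cnj a = a"
proof -
  let ?Gc = "map_mat complex_of_real G"
  obtain v where v: "v \<in> carrier_vec r" and v0: "v \<noteq> 0\<^sub>v r" and Gv: "?Gc *\<^sub>v v = a \<cdot>\<^sub>v v"
    using ev G unfolding eigenvalue_def eigenvector_def by auto
  have G_entry_sym: "G $$ (i, j) = G $$ (j, i)" if "i < r" "j < r" for i j
    using arg_cong[OF G_sym, of "\<lambda>M. M $$ (j, i)"] that G by auto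
  define s where "s = (\<Sum>i\<in>{0..<r}. \<Sum>j\<in>{0..<r}. cnj (v $ i) * of_real (G $$ (i, j)) * v $ j)"
  have "s = (\<Sum>i\<in>{0..<r}. cnj (v $ i) * (?Gc *\<^sub>v v) $ i)"
    unfolding s_def using v G by (simp add: scalar_prod_def sum_distrib_left mult_ac)
  also have "\<dots> = a * (v \<bullet>c v)"
    unfolding Gv using v by (simp add: scalar_prod_def sum_distrib_left mult_ac)
  finally have s_eq: "s = a * (v \<bullet>c v)" .
  have "cnj s = (\<Sum>i\<in>{0..<r}. \<Sum>j\<in>{0..<r}. v $ i * of_real (G $$ (i, j)) * cnj (v $ j))"
    unfolding s_def by (simp add: cnj_sum)
  also have "\<dots> = (\<Sum>j\<in>{0..<r}. \<Sum>i\<in>{0..<r}. v $ i * of_real (G $$ (i, j)) * cnj (v $ j))"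
    by (rule sum.swap)
  also have "\<dots> = s" unfolding s_def
    by (rule sum.cong[OF refl], rule sum.cong[OF refl]) (auto simp: G_entry_sym mult_ac)
  finally have "cnj s = s" .
  moreover have "cnj (v \<bullet>c v) = v \<bullet>c v" by (simp add: scalar_prod_def cnj_sum mult.commute)
  moreover have "v \<bullet>c v \<noteq> 0" using conjugate_square_eq_0_vec[OF v] v0 by simp
  ultimately show ?thesis using s_eq by simp
qed

lemma map_poly_of_real_prod_linear:
  assumes "\<forall>a\<in>set as. complex_of_real (Re a) = a"
  shows "map_poly complex_of_real (\<Prod>e\<leftarrow>map Re as. [:- e, 1:]) = (\<Prod>a\<leftarrow>as. [:- a, 1:])"
proof -
  interpret m: map_poly_inj_idom_hom complex_of_real ..
  show ?thesis using assms
  proof (induction as)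
    case (Cons a as)
    then have "map_poly complex_of_real [:- Re a, 1:] = [:- a, 1:]" by simp
    with Cons show ?case by (simp only: list.map prod_list.Cons m.hom_mult) simp
  qed simp
qed

lemma real_symmetric_char_poly_splits:
  fixes G :: "real mat"
  assumes G: "G \<in> carrier_mat r r" and G_sym: "transpose_mat G = G"
  obtains es where "char_poly G = (\<Prod>e\<leftarrow>es. [:- e, 1:])" and "length es = r"
proof -
  interpret of_real_poly: map_poly_inj_idom_hom complex_of_real ..
  let ?Gc = "map_mat complex_of_real G"
  have Gc: "?Gc \<in> carrier_mat r r" using G by auto
  obtain as where cp: "char_poly ?Gc = (\<Prod>a\<leftarrow>as. [:- a, 1:])" and len: "length as = r"
    using char_poly_factorized[OF Gc] by blast
  have real: "\<forall>a\<in>set as. complex_of_real (Re a) = a"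
  proof
    fix a assume "a \<in> set as"
    then have "poly (char_poly ?Gc) a = 0" unfolding cp by (rule linear_poly_root)
    then have "cnj a = a"
      using eigenvalue_root_char_poly[OF Gc] real_symmetric_eigenvalue_real[OF G G_sym] by simp
    then show "complex_of_real (Re a) = a" by (metis Reals_cnj_iff complex_is_Real_iff of_real_Re)
  qed
  have "map_poly complex_of_real (char_poly G) = char_poly ?Gc"
    by (rule of_real_hom.char_poly_hom[OF G, symmetric])
  also have "\<dots> = map_poly complex_of_real (\<Prod>e\<leftarrow>map Re as. [:- e, 1:])"
    unfolding cp map_poly_of_real_prod_linear[OF real] ..
  finally have "map_poly complex_of_real (char_poly G)
      = map_poly complex_of_real (\<Prod>e\<leftarrow>map Re as. [:- e, 1:])" .
  then have "char_poly G = (\<Prod>e\<leftarrow>map Re as. [:- e, 1:])"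
    by (rule of_real_poly.injectivity)
  moreover have "length (map Re as) = r" using len by simp
  ultimately show ?thesis by (rule that)
qed

lemma proots_prod_linear_factors: "proots (\<Prod>e\<leftarrow>es. [:- (e::real), 1:]) = mset es"
proof (induction es)
  case Nil then show ?case by simp
next
  case (Cons a es)
  have ne: "(\<Prod>e\<leftarrow>es. [:- (e::real), 1:]) \<noteq> 0" by (auto simp: prod_list_zero_iff)
  have "proots ([:- a, 1:] * (\<Prod>e\<leftarrow>es. [:- e, 1:])) = proots [:- a, 1:] + proots (\<Prod>e\<leftarrow>es. [:- e, 1:])"
    by (rule proots_mult) (use ne in auto)
  also have "proots [:- a, 1:] = {#a#}" using proots_linear_factor[of "- a"] by simp
  finally show ?case using Cons by simp
qed

lemma gram_eigenvalue_nonneg: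
  fixes X :: "real mat"
  assumes X: "X \<in> carrier_mat n r" and ev: "eigenvalue (transpose_mat X * X) e"
  shows "e \<ge> 0"
proof -
  have XT: "transpose_mat X \<in> carrier_mat r n" using X by auto
  obtain v where v: "v \<in> carrier_vec r" and v0: "v \<noteq> 0\<^sub>v r"
    and Gv: "transpose_mat X * X *\<^sub>v v = e \<cdot>\<^sub>v v"
    using ev X unfolding eigenvalue_def eigenvector_def by auto
  have Xv: "X *\<^sub>v v \<in> carrier_vec n" using X v by auto
  have "e * (v \<bullet> v) = (transpose_mat X *\<^sub>v (X *\<^sub>v v)) \<bullet> v"
    using Gv v X by simp
  also have "\<dots> = (X *\<^sub>v v) \<bullet> (X *\<^sub>v v)" by (rule transpose_vec_mult_scalar[OF X v Xv])
  finally have "e * (v \<bullet> v) \<ge> 0" using real_scalar_prod_self_nonneg[of "X *\<^sub>v v"] by simp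
  moreover have "v \<bullet> v > 0"
    using real_scalar_prod_self_nonneg[of v] real_scalar_prod_self_eq_0_iff[OF v] v0 by simp
  ultimately show ?thesis by (simp add: zero_le_mult_iff)
qed

lemma sigma_eq_0_if_gram_singular:
  fixes X :: "real mat"
  assumes X: "X \<in> carrier_mat n r" and r: "0 < r" and singular: "det (transpose_mat X * X) = 0"
  shows "sigma r X = 0"
proof -
  define G where "G = transpose_mat X * X"
  have G: "G \<in> carrier_mat r r" using X unfolding G_def by auto
  have "transpose_mat G = G" unfolding G_def using transpose_mult[of _ r n X r] X by simp
  then obtain es where cp: "char_poly G = (\<Prod>e\<leftarrow>es. [:- e, 1:])" and len: "length es = r"
    using real_symmetric_char_poly_splits[OF G] by blast
  have root_iff: "e \<in> set es \<longleftrightarrow> eigenvalue G e" for e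
    using eigenvalue_root_char_poly[OF G] cp by (simp add: poly_prod_list_zero_iff)
  have nonneg: "e \<ge> 0" if "e \<in> set es" for e
    using gram_eigenvalue_nonneg[OF X] root_iff that unfolding G_def by blast
  obtain v where v: "v \<in> carrier_vec r" and v0: "v \<noteq> 0\<^sub>v r" and Gv: "G *\<^sub>v v = 0\<^sub>v r"
    using det_0_iff_vec_prod_zero[OF G] singular unfolding G_def by auto
  have "G *\<^sub>v v = 0 \<cdot>\<^sub>v v" using Gv v by (auto intro!: eq_vecI)
  then have "eigenvalue G 0" unfolding eigenvalue_def eigenvector_def using v v0 G by auto
  then have zero_in: "0 \<in> set (sort es)" using root_iff by simp
  have sorted_len: "length (sort es) = r" using len by simp
  have "sigma r X = sqrt (sort es ! 0)"
    unfolding sigma_def singular_values_def G_def[symmetric] cp proots_prod_linear_factors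
    using sorted_len r by (simp add: rev_nth)
  also have "sort es ! 0 = 0"
  proof -
    obtain k where "k < r" and "sort es ! k = 0" using zero_in sorted_len by (metis in_set_conv_nth)
    moreover have "sort es ! 0 \<in> set es" using sorted_len r by (metis nth_mem set_sort)
    ultimately show ?thesis
      using nonneg sorted_nth_mono[of "sort es" 0 k] sorted_len by fastforce
  qed
  finally show ?thesis by simp
qed

lemma symmetric_residual_mult_eq_0:
  fixes X E J :: "real mat"
  assumes X: "X \<in> carrier_mat n r" and E: "E \<in> carrier_mat n n" and E_sym: "transpose_mat E = E"
    and J: "J \<in> carrier_mat (n * n) (n * r)"
    and J_def: "\<forall>Y \<in> carrier_mat n r.
                  J *\<^sub>v vecm Y = vecm (X * transpose_mat Y + Y * transpose_mat X)"
    and pinv0: "mp_pinv J *\<^sub>v vecm E = 0\<^sub>v (n * r)"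
  shows "E * X = 0\<^sub>m n r"
proof -
  have EX: "E * X \<in> carrier_mat n r" using E X by auto
  have "0 = (transpose_mat J *\<^sub>v vecm E) \<bullet> vecm (E * X)"
    using mp_pinv_mult_vec_eq_0_imp_transpose[OF J vecm_carrier[OF E] pinv0] vecm_carrier[OF EX]
    by simp
  also have "\<dots> = vecm E \<bullet> (J *\<^sub>v vecm (E * X))"
    by (rule transpose_vec_mult_scalar[OF J vecm_carrier[OF EX] vecm_carrier[OF E]])
  also have "\<dots> = 2 * (vecm (E * X) \<bullet> vecm (E * X))"
    using J_def EX vecm_scalar_prod_symmetrized[OF E E_sym X EX] by simp
  finally show ?thesis using vecm_self_scalar_prod_eq_0[OF EX] by simp
qed

theorem lemma12:
  fixes X Z J :: "real mat" and n r :: nat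
  assumes X: "X \<in> carrier_mat n r"
    and Z: "Z \<in> carrier_mat n r"
    and J: "J \<in> carrier_mat (n * n) (n * r)"
    and J_def: "\<forall>Y \<in> carrier_mat n r.
                  J *\<^sub>v vecm Y = vecm (X * transpose_mat Y + Y * transpose_mat X)"
    and pinv0: "mp_pinv J *\<^sub>v vecm (X * transpose_mat X - Z * transpose_mat Z) = 0\<^sub>v (n * r)"
  shows "X * transpose_mat X = Z * transpose_mat Z \<or> sigma r X = 0"
proof (cases "det (transpose_mat X * X) = 0")
  case True
  have "r \<noteq> 0"
  proof
    assume "r = 0"
    then have "transpose_mat X * X = 1\<^sub>m 0" using X by (auto intro!: eq_matI)
    with True show False by simp
  qed
  then show ?thesis using sigma_eq_0_if_gram_singular[OF X _ True] by simp
next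
  case False
  define E where "E = X * transpose_mat X - Z * transpose_mat Z"
  have E: "E \<in> carrier_mat n n" unfolding E_def using X Z by auto
  have "transpose_mat E = E"
    unfolding E_def using X Z
    by (simp add: transpose_minus[of _ n n] transpose_mult[of X n r] transpose_mult[of Z n r])
  then have "E * X = 0\<^sub>m n r"
    using symmetric_residual_mult_eq_0[OF X E _ J J_def] pinv0 unfolding E_def by simp
  then show ?thesis
    using mult_transpose_eq_of_full_column_rank[OF X Z _ False] unfolding E_def by simp
qed

end
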